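(* Let $Q$ be a quantale, $M$ a shrinkable $Q$-module, $\mathcal{F}_1,\dots,\mathcal{F}_n\in\operatorname{mF}(Q)$ and $\mathcal{F}=\mathcal{F}_1\cap\cdots\cap\mathcal{F}_n$. Let $\varphi:M_\mathcal{F}\to\prod_{k=1}^nM_{\mathcal{F}_k}$ be the $Q$-premodule map $\overline x\mapsto(\overline x,\dots,\overline x)$. Then (a) $\varphi$ is injective; (b) if $\mathcal{F}_i+\mathcal{F}_j$ is 1-step over $M$ for all $1\le i<j\le n$, then for $x_1,\dots,x_n\in M$ we have $(\overline{x_1},\dots,\overline{x_n})\in\operatorname{im}\varphi$ if and only if for all $1\le i<j\le n$ the image of $\overline{x_i}$ under $M_{\mathcal{F}_i}\to M_{\mathcal{F}_i+\mathcal{F}_j}$ equals the image of $\overline{x_j}$ under $M_{\mathcal{F}_j}\to M_{\mathcal{F}_i+\mathcal{F}_j}$.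
   Context: A quantale is a poset $Q$ in which every nonempty subset has a join $\sum$ (binary join $a+b$; no bottom required), with top $1$ and a commutative associative multiplication with unit $1$ distributing over nonempty joins. A $Q$-module is a poset $M$ with all nonempty joins and an associative unital action $Q\times M\to M$ distributing over nonempty joins in each variable; a $Q$-premodule requires only binary joins and finite distributivity. A multiplicative filter (m-filter) is a subset $\mathcal{F}\subseteq Q$ containing $1$, upward closed and closed under multiplication; $\operatorname{mF}(Q)$ is the set of them; $\mathcal{F}+\mathcal{G}$ is the smallest m-filter containing $\mathcal{F}\cup\mathcal{G}$. For $x,x_i$ write $x\le^*\sum_{i\in I}x_i$ if $x\le\sum_{i\in I_0}x_i$ for a finite nonempty $I_0\subseteq I$. $M$ is shrinkable if whenever $x\le\sum_ix_i$ there is a family $(y_j)$ with $x=\sum_jy_j$ and $y_j\le^*\sum_ix_i$ for all $j$. Localization: $a\preceq^1_\mathcal{F}b$ means there are families $(a_i)$ in $M$, $(s_i)$ in $\mathcal{F}$ with $a\le\sum_ia_i$ and $s_ia_i\le b$; $a\preceq^n_\mathcal{F}b$ means a chain of $n$ such steps through elements of $M$; $a\preceq_\mathcal{F}b$ means $a\preceq^n_\mathcal{F}b$ for some $n\ge1$. $M_\mathcal{F}=M/\!\sim$ where $a\sim b$ iff $a\preceq_\mathcal{F}b$ and $b\preceq_\mathcal{F}a$, with classes $\overline a$ ordered by $\overline a\le\overline b\iff a\preceq_\mathcal{F}b$; it is a $Q$-premodule via $\overline a+\overline b=\overline{a+b}$, $q\overline a=\overline{qa}$. For $\mathcal{F}\subseteq\mathcal{G}$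 the map $M_\mathcal{F}\to M_\mathcal{G}$, $\overline a\mapsto\overline a$, is a well-defined premodule map. $\mathcal{F}$ is localizable over $M$ if for each $b$ there is $n_b$ with $a\preceq_\mathcal{F}b\Rightarrow a\preceq^{n_b}_\mathcal{F}b$; $\mathcal{F}$ is 1-step over $M$ if it is localizable and $a\preceq_\mathcal{F}b$ implies $a\preceq^1_\mathcal{F}b$. *)

theory Defs
  imports "HOL-Library.FuncSet"
begin

definition is_join :: "'a::order set \<Rightarrow> 'a \<Rightarrow> bool" where
  "is_join S x \<longleftrightarrow> (\<forall>y\<in>S. y \<le> x) \<and> (\<forall>z. (\<forall>y\<in>S. y \<le> z) \<longrightarrow> x \<le> z)"

definition join :: "'a::order set \<Rightarrow> 'a" where
  "join S = (THE x. is_join S x)"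

definition has_ne_joins :: "'a::order itself \<Rightarrow> bool" where
  "has_ne_joins _ \<longleftrightarrow> (\<forall>S::'a set. S \<noteq> {} \<longrightarrow> (\<exists>x. is_join S x))"

definition quantale :: "'q::{order,comm_monoid_mult} itself \<Rightarrow> bool" where
  "quantale T \<longleftrightarrow> has_ne_joins T \<and> (\<forall>x::'q. x \<le> 1) \<and>
     (\<forall>(q::'q) S. S \<noteq> {} \<longrightarrow> q * join S = join ((\<lambda>s. q * s) ` S))"

definition qmodule :: "('q::{order,comm_monoid_mult} \<Rightarrow> 'm::order \<Rightarrow> 'm) \<Rightarrow> bool" where
  "qmodule act \<longleftrightarrow> has_ne_joins TYPE('m) \<and>
     (\<forall>m. act 1 m = m) \<and>
     (\<forall>p q m. act (p * q) m = act p (act q m)) \<and>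
     (\<forall>q S. S \<noteq> {} \<longrightarrow> act q (join S) = join (act q ` S)) \<and>
     (\<forall>m T. T \<noteq> {} \<longrightarrow> act (join T) m = join ((\<lambda>q. act q m) ` T))"

text \<open>Families are represented by (nonempty) sets of their members; duplicates are
irrelevant for joins.\<close>
definition shrinkable :: "'m::order itself \<Rightarrow> bool" where
  "shrinkable _ \<longleftrightarrow> (\<forall>(x::'m) X. X \<noteq> {} \<and> x \<le> join X \<longrightarrow>
     (\<exists>Y. Y \<noteq> {} \<and> x = join Y \<and>
        (\<forall>y\<in>Y. \<exists>X0. finite X0 \<and> X0 \<noteq> {} \<and> X0 \<subseteq> X \<and> y \<le> join X0)))"

definition mfilter :: "'q::{order,comm_monoid_mult} set \<Rightarrow> bool" where
  "mfilter F \<longleftrightarrow> 1 \<in> F \<and> (\<forall>a b. a \<in> F \<and> a \<le> b \<longrightarrow> b \<in> F) \<and>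
     (\<forall>a\<in>F. \<forall>b\<in>F. a * b \<in> F)"

definition mfsum :: "'q::{order,comm_monoid_mult} set \<Rightarrow> 'q set \<Rightarrow> 'q set" where
  "mfsum F G = \<Inter>{H. mfilter H \<and> F \<union> G \<subseteq> H}"

text \<open>One step: families (a_i, s_i), given as a nonempty set of pairs.\<close>
definition step1 :: "('q::{order,comm_monoid_mult} \<Rightarrow> 'm::order \<Rightarrow> 'm) \<Rightarrow> 'q set \<Rightarrow> 'm \<Rightarrow> 'm \<Rightarrow> bool" where
  "step1 act F a b \<longleftrightarrow> (\<exists>P::('m \<times> 'q) set. P \<noteq> {} \<and>
     (\<forall>(c, s)\<in>P. s \<in> F \<and> act s c \<le> b) \<and> a \<le> join (fst ` P))"

definition stepn :: "('q::{order,comm_monoid_mult} \<Rightarrow> 'm::order \<Rightarrow> 'm) \<Rightarrow> 'q set \<Rightarrow> nat \<Rightarrow> 'm \<Rightarrow> 'm \<Rightarrow> bool" where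
  "stepn act F n = (step1 act F ^^ n)"

definition loc_le :: "('q::{order,comm_monoid_mult} \<Rightarrow> 'm::order \<Rightarrow> 'm) \<Rightarrow> 'q set \<Rightarrow> 'm \<Rightarrow> 'm \<Rightarrow> bool" where
  "loc_le act F a b \<longleftrightarrow> (\<exists>n\<ge>1. stepn act F n a b)"

definition loc_eq :: "('q::{order,comm_monoid_mult} \<Rightarrow> 'm::order \<Rightarrow> 'm) \<Rightarrow> 'q set \<Rightarrow> 'm \<Rightarrow> 'm \<Rightarrow> bool" where
  "loc_eq act F a b \<longleftrightarrow> loc_le act F a b \<and> loc_le act F b a"

definition cls :: "('q::{order,comm_monoid_mult} \<Rightarrow> 'm::order \<Rightarrow> 'm) \<Rightarrow> 'q set \<Rightarrow> 'm \<Rightarrow> 'm set" where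
  "cls act F a = {b. loc_eq act F a b}"

definition locmod :: "('q::{order,comm_monoid_mult} \<Rightarrow> 'm::order \<Rightarrow> 'm) \<Rightarrow> 'q set \<Rightarrow> 'm set set" where
  "locmod act F = range (cls act F)"

definition locmap :: "('q::{order,comm_monoid_mult} \<Rightarrow> 'm::order \<Rightarrow> 'm) \<Rightarrow> 'q set \<Rightarrow> 'q set \<Rightarrow> 'm set \<Rightarrow> 'm set" where
  "locmap act F G C = cls act G (SOME a. a \<in> C)"

definition localizable :: "('q::{order,comm_monoid_mult} \<Rightarrow> 'm::order \<Rightarrow> 'm) \<Rightarrow> 'q set \<Rightarrow> bool" where
  "localizable act F \<longleftrightarrow> (\<forall>b. \<exists>nb\<ge>1. \<forall>a. loc_le act F a b \<longrightarrow> stepn act F nb a b)"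

definition one_step :: "('q::{order,comm_monoid_mult} \<Rightarrow> 'm::order \<Rightarrow> 'm) \<Rightarrow> 'q set \<Rightarrow> bool" where
  "one_step act F \<longleftrightarrow> localizable act F \<and> (\<forall>a b. loc_le act F a b \<longrightarrow> step1 act F a b)"

text \<open>The diagonal map M_F \<rightarrow> \<Prod>_{k=1..n} M_{F_k}; tuples are functions on {1..n}.\<close>
definition diag :: "('q::{order,comm_monoid_mult} \<Rightarrow> 'm::order \<Rightarrow> 'm) \<Rightarrow> 'q set \<Rightarrow> nat \<Rightarrow> (nat \<Rightarrow> 'q set) \<Rightarrow> 'm set \<Rightarrow> (nat \<Rightarrow> 'm set)" where
  "diag act F n Fs C = restrict (\<lambda>k. locmap act F (Fs k) C) {1..n}"

end

theory Submission
  imports Defs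
begin

text \<open>Over a shrinkable module the localisation preorder of an intersection of two
  m-filters is the intersection of their preorders: if a reaches b in m steps over G and in
  p steps over H, shrinkability refines a into pieces that take the first step of both chains
  at once, and induction on m + p merges the chains. This gives injectivity. For the image,
  one-step compatibility refines each x_i into pieces y such that for every j some
  s \<in> F_i + F_j has s y \<le> x_j. Every such s dominates a product f g with f \<in> F_i and
  g \<in> F_j, so a single f \<in> F_i moves y into the set A of elements z with g z \<le> x_j for some
  g \<in> F_j, for all j; the join of A then represents every x_k.\<close>

lemma restrict_eq_iff: "restrict f A = restrict g A \<longleftrightarrow> (\<forall>x\<in>A. f x = g x)"
  by (metis restrict_apply' restrict_ext)

lemma all_less_pairs_iff:
  assumes "\<And>i j. i \<in> {1..n} \<Longrightarrow> j \<in> {1..n} \<Longrightarrow> P i j \<longleftrightarrow> Q i j"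
    and "\<And>i j. Q i j \<longleftrightarrow> Q j i"
  shows "(\<forall>i j. 1 \<le> i \<and> i < j \<and> j \<le> n \<longrightarrow> P i j) \<longleftrightarrow> (\<forall>i\<in>{1..n}. \<forall>j\<in>{1..n}. i \<noteq> j \<longrightarrow> Q i (j::nat))"
proof
  assume less: "\<forall>i j. 1 \<le> i \<and> i < j \<and> j \<le> n \<longrightarrow> P i j"
  show "\<forall>i\<in>{1..n}. \<forall>j\<in>{1..n}. i \<noteq> j \<longrightarrow> Q i j"
  proof (intro ballI impI)
    fix i j
    assume "i \<in> {1..n}" "j \<in> {1..n}" "i \<noteq> j"
    then consider "1 \<le> i \<and> i < j \<and> j \<le> n" | "1 \<le> j \<and> j < i \<and> i \<le> n"
      by fastforce
    then show "Q i j"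
    proof cases
      case 1
      then show ?thesis
        using less assms(1) by auto
    next
      case 2
      then have "Q j i"
        using less assms(1) by auto
      then show ?thesis
        using assms(2) by blast
    qed
  qed
qed (use assms in auto)

section \<open>Joins and covers\<close>

lemma is_join_unique: "is_join S x \<Longrightarrow> is_join S y \<Longrightarrow> x = (y::'a::order)"
  unfolding is_join_def by (meson order_antisym)

lemma join_eq: "is_join S x \<Longrightarrow> join S = x"
  unfolding join_def using is_join_unique by blast

lemma join_singleton: "join {x::'a::order} = x"
  by (rule join_eq) (auto simp: is_join_def)

lemma join_pair_of_le: "(a::'a::order) \<le> b \<Longrightarrow> join {a, b} = b"
  by (rule join_eq) (auto simp: is_join_def)

definition down_closed :: "('a::order \<Rightarrow> bool) \<Rightarrow> bool" where
  "down_closed P \<longleftrightarrow> (\<forall>y z. y \<le> z \<longrightarrow> P z \<longrightarrow> P y)"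

definition join_closed :: "('a::order \<Rightarrow> bool) \<Rightarrow> bool" where
  "join_closed P \<longleftrightarrow> (\<forall>y z. P y \<longrightarrow> P z \<longrightarrow> P (join {y, z}))"

context
  assumes joins: "has_ne_joins TYPE('a::order)"
begin

lemma join_is_join: "S \<noteq> {} \<Longrightarrow> is_join (S::'a set) (join S)"
  using joins unfolding has_ne_joins_def using join_eq by metis

lemma join_upper: "x \<in> S \<Longrightarrow> x \<le> join (S::'a set)"
  using join_is_join[of S] unfolding is_join_def by blast

lemma join_least: "S \<noteq> {} \<Longrightarrow> (\<And>y. y \<in> S \<Longrightarrow> y \<le> z) \<Longrightarrow> join (S::'a set) \<le> z"
  using join_is_join[of S] unfolding is_join_def by blast

lemma join_mono: "A \<noteq> {} \<Longrightarrow> A \<subseteq> B \<Longrightarrow> join (A::'a set) \<le> join B"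
  by (rule join_least) (auto intro: join_upper)

lemma join_pair_least: "(a::'a) \<le> c \<Longrightarrow> b \<le> c \<Longrightarrow> join {a, b} \<le> c"
  by (rule join_least) auto

lemma join_closed_finite:
  assumes "down_closed P" "join_closed P"
  shows "finite X \<Longrightarrow> X \<noteq> {} \<Longrightarrow> \<forall>x\<in>X. P x \<Longrightarrow> P (join (X::'a set))"
proof (induction X rule: finite_ne_induct)
  case (singleton x)
  then show ?case by (simp add: join_singleton)
next
  case (insert x X)
  have "join (insert x X) \<le> join {x, join X}"
  proof (rule join_least, simp)
    fix y assume "y \<in> insert x X"
    moreover have "join X \<le> join {x, join X}"
      by (rule join_upper) simp
    ultimately show "y \<le> join {x, join X}"
      using join_upper[of y X] join_upper[of x "{x, join X}"]
      by (auto intro: order_trans)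
  qed
  moreover have "P (join {x, join X})"
    using assms(2) insert by (simp add: join_closed_def)
  ultimately show ?case
    using assms(1) unfolding down_closed_def by blast
qed

end

definition covered :: "('a::order \<Rightarrow> bool) \<Rightarrow> 'a \<Rightarrow> bool" where
  "covered P x \<longleftrightarrow> (\<exists>Y. Y \<noteq> {} \<and> x \<le> join Y \<and> (\<forall>y\<in>Y. P y \<and> y \<le> x))"

lemma covered_self: "P x \<Longrightarrow> covered P x"
  unfolding covered_def by (intro exI[of _ "{x}"]) (simp add: join_singleton)

lemma covered_mono: "covered P x \<Longrightarrow> (\<And>y. P y \<Longrightarrow> Q y) \<Longrightarrow> covered Q x"
  unfolding covered_def by blast

lemma down_closed_Ball: "(\<And>j. j \<in> J \<Longrightarrow> down_closed (P j)) \<Longrightarrow> down_closed (\<lambda>y. \<forall>j\<in>J. P j y)"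
  unfolding down_closed_def by blast

context
  assumes joins: "has_ne_joins TYPE('a::order)" and shrink: "shrinkable TYPE('a)"
begin

lemma covered_if_le_join:
  assumes "down_closed P" "join_closed P" "C \<noteq> {}" "(x::'a) \<le> join C" "\<forall>c\<in>C. P c"
  shows "covered P x"
proof -
  have "\<exists>Y. Y \<noteq> {} \<and> x = join Y \<and>
      (\<forall>y\<in>Y. \<exists>X0. finite X0 \<and> X0 \<noteq> {} \<and> X0 \<subseteq> C \<and> y \<le> join X0)"
    using shrink assms(3,4) unfolding shrinkable_def by simp
  then obtain Y where Y: "Y \<noteq> {}" "x = join Y"
    and fin: "\<forall>y\<in>Y. \<exists>X0. finite X0 \<and> X0 \<noteq> {} \<and> X0 \<subseteq> C \<and> y \<le> join X0"
    by blast
  have "P y \<and> y \<le> x" if y: "y \<in> Y" for y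
  proof -
    obtain X0 where X0: "finite X0" "X0 \<noteq> {}" "X0 \<subseteq> C" "y \<le> join X0"
      using fin y by blast
    have "P (join X0)"
      using join_closed_finite[OF joins assms(1,2) X0(1,2)] X0(3) assms(5) by blast
    then have "P y"
      using assms(1) X0(4) unfolding down_closed_def by blast
    moreover have "y \<le> x"
      using Y(2) join_upper[OF joins y] by simp
    ultimately show ?thesis ..
  qed
  then show ?thesis
    unfolding covered_def using Y(1,2) by (intro exI[of _ Y]) simp
qed

lemma covered_conj:
  assumes "down_closed P" "down_closed Q" "join_closed Q"
    and "covered P (x::'a)" "covered Q x"
  shows "covered (\<lambda>y. P y \<and> Q y) x"
proof -
  obtain Y where Y: "Y \<noteq> {}" "x \<le> join Y" "\<forall>y\<in>Y. P y \<and> y \<le> x"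
    using assms(4) unfolding covered_def by blast
  obtain Y' where Y': "Y' \<noteq> {}" "x \<le> join Y'" "\<forall>y\<in>Y'. Q y"
    using assms(5) unfolding covered_def by blast
  have "covered Q y" if "y \<in> Y" for y
  proof (rule covered_if_le_join[OF assms(2,3) Y'(1) _ Y'(3)])
    show "y \<le> join Y'"
      using that Y(3) Y'(2) by (meson order_trans)
  qed
  then obtain Z where Z: "\<And>y. y \<in> Y \<Longrightarrow> Z y \<noteq> {} \<and> y \<le> join (Z y) \<and> (\<forall>z\<in>Z y. Q z \<and> z \<le> y)"
    unfolding covered_def by metis
  let ?W = "\<Union>y\<in>Y. Z y"
  have "join Y \<le> join ?W"
  proof (rule join_least[OF joins Y(1)])
    fix y assume "y \<in> Y"
    then show "y \<le> join ?W"
      using Z join_mono[OF joins, of "Z y" ?W] by (meson UN_upper order_trans)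
  qed
  moreover have "P z \<and> Q z \<and> z \<le> x" if z: "z \<in> ?W" for z
  proof -
    obtain y where "y \<in> Y" "z \<in> Z y"
      using z by blast
    then show ?thesis
      using Y(3) Z assms(1) unfolding down_closed_def by (meson order_trans)
  qed
  ultimately show ?thesis
    unfolding covered_def using Y Z by (intro exI[of _ ?W]) (auto dest: order_trans)
qed

lemma covered_Ball:
  assumes "finite J"
    and "\<And>j. j \<in> J \<Longrightarrow> down_closed (P j) \<and> join_closed (P j) \<and> covered (P j) (x::'a)"
  shows "covered (\<lambda>y. \<forall>j\<in>J. P j y) x"
  using assms
proof (induction J rule: finite_induct)
  case empty
  then show ?case by (simp add: covered_self)
next
  case (insert j J)
  have "covered (\<lambda>y. (\<forall>i\<in>J. P i y) \<and> P j y) x"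
    using insert by (intro covered_conj down_closed_Ball) auto
  then show ?case
    by (rule covered_mono) simp
qed

end

lemma mfilter_one: "mfilter F \<Longrightarrow> 1 \<in> F"
  by (simp add: mfilter_def)

lemma mfilter_up: "mfilter F \<Longrightarrow> a \<in> F \<Longrightarrow> a \<le> b \<Longrightarrow> b \<in> F"
  by (auto simp: mfilter_def)

lemma mfilter_mult: "mfilter F \<Longrightarrow> a \<in> F \<Longrightarrow> b \<in> F \<Longrightarrow> a * b \<in> F"
  by (simp add: mfilter_def)

lemma mfilter_INT: "(\<And>i. i \<in> I \<Longrightarrow> mfilter (Fs i)) \<Longrightarrow> mfilter (\<Inter>i\<in>I. Fs i)"
  unfolding mfilter_def by (intro conjI allI ballI impI INT_I; meson INT_D)

lemma mfilter_mfsum: "mfilter (mfsum F G)"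
  unfolding mfsum_def mfilter_def by blast

lemma mfsum_one: "1 \<in> mfsum F G"
  using mfilter_mfsum mfilter_one by blast

lemma mfsum_upper1: "F \<subseteq> mfsum F G"
  unfolding mfsum_def by blast

lemma mfsum_upper2: "G \<subseteq> mfsum F G"
  unfolding mfsum_def by blast

lemma mfsum_commute: "mfsum F G = mfsum G F"
  unfolding mfsum_def by (simp add: Un_commute)

section \<open>Localisation steps\<close>

definition loc_below :: "('q::{order,comm_monoid_mult} \<Rightarrow> 'm::order \<Rightarrow> 'm) \<Rightarrow> 'q set \<Rightarrow> 'm \<Rightarrow> 'm \<Rightarrow> bool" where
  "loc_below act F y c \<longleftrightarrow> (\<exists>s\<in>F. act s y \<le> c)"

lemma step1_iff_loc_below:
  "step1 act F a c \<longleftrightarrow> (\<exists>Y. Y \<noteq> {} \<and> a \<le> join Y \<and> (\<forall>y\<in>Y. loc_below act F y c))"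
proof
  assume "step1 act F a c"
  then obtain P where "P \<noteq> {}" "\<forall>(d, s)\<in>P. s \<in> F \<and> act s d \<le> c" "a \<le> join (fst ` P)"
    unfolding step1_def by blast
  then show "\<exists>Y. Y \<noteq> {} \<and> a \<le> join Y \<and> (\<forall>y\<in>Y. loc_below act F y c)"
    unfolding loc_below_def by (intro exI[of _ "fst ` P"]) fastforce
next
  assume "\<exists>Y. Y \<noteq> {} \<and> a \<le> join Y \<and> (\<forall>y\<in>Y. loc_below act F y c)"
  then obtain Y s where "Y \<noteq> {}" "a \<le> join Y" "\<forall>y\<in>Y. s y \<in> F \<and> act (s y) y \<le> c"
    unfolding loc_below_def by metis
  then show "step1 act F a c"
    unfolding step1_def by (intro exI[of _ "(\<lambda>y. (y, s y)) ` Y"]) (auto simp: image_image)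
qed

lemma step1_of_loc_below:
  "Y \<noteq> {} \<Longrightarrow> a \<le> join Y \<Longrightarrow> (\<And>y. y \<in> Y \<Longrightarrow> loc_below act F y c) \<Longrightarrow> step1 act F a c"
  unfolding step1_iff_loc_below by blast

lemma step1_down: "x \<le> a \<Longrightarrow> step1 act F a c \<Longrightarrow> step1 act F x c"
  unfolding step1_iff_loc_below by (meson order_trans)

lemma step1_filter_mono: "F \<subseteq> G \<Longrightarrow> step1 act F a c \<Longrightarrow> step1 act G a c"
  unfolding step1_iff_loc_below loc_below_def by (meson subsetD)

lemma stepn_filter_mono: "F \<subseteq> G \<Longrightarrow> stepn act F n a b \<Longrightarrow> stepn act G n a b"
  unfolding stepn_def using relpowp_mono[of "step1 act F" "step1 act G"] step1_filter_mono by blast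

lemma loc_le_filter_mono: "F \<subseteq> G \<Longrightarrow> loc_le act F a b \<Longrightarrow> loc_le act G a b"
  unfolding loc_le_def using stepn_filter_mono by blast

lemma loc_eq_filter_mono: "F \<subseteq> G \<Longrightarrow> loc_eq act F a b \<Longrightarrow> loc_eq act G a b"
  unfolding loc_eq_def using loc_le_filter_mono by blast

lemma loc_le_of_step1: "step1 act F a b \<Longrightarrow> loc_le act F a b"
  unfolding loc_le_def stepn_def by (intro exI[of _ 1]) (simp add: eq_OO)

lemma loc_le_trans: "loc_le act F a b \<Longrightarrow> loc_le act F b c \<Longrightarrow> loc_le act F a c"
  unfolding loc_le_def stepn_def by (metis relpowp_add relcomppI trans_le_add1)

lemma loc_eq_sym: "loc_eq act F a b \<Longrightarrow> loc_eq act F b a"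
  unfolding loc_eq_def by blast

lemma loc_eq_trans: "loc_eq act F a b \<Longrightarrow> loc_eq act F b c \<Longrightarrow> loc_eq act F a c"
  unfolding loc_eq_def using loc_le_trans by blast

text \<open>Unlike stepn, which is equality for zero steps, this relation is down-closed in
  its first argument for every number of steps.\<close>
primrec loc_steps :: "('q::{order,comm_monoid_mult} \<Rightarrow> 'm::order \<Rightarrow> 'm) \<Rightarrow> 'q set \<Rightarrow> nat \<Rightarrow> 'm \<Rightarrow> 'm \<Rightarrow> bool" where
  "loc_steps act F 0 a b \<longleftrightarrow> a \<le> b"
| "loc_steps act F (Suc m) a b \<longleftrightarrow> (\<exists>c. step1 act F a c \<and> loc_steps act F m c b)"

lemma loc_steps_down: "x \<le> a \<Longrightarrow> loc_steps act F m a b \<Longrightarrow> loc_steps act F m x b"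
  by (cases m) (auto intro: order_trans step1_down)

locale quantale_module =
  fixes act :: "'q::{order,comm_monoid_mult} \<Rightarrow> 'm::order \<Rightarrow> 'm"
  assumes quantale: "quantale TYPE('q)" and module: "qmodule act"
begin

lemma quantale_joins: "has_ne_joins TYPE('q)"
  using quantale by (simp add: quantale_def)

lemma module_joins: "has_ne_joins TYPE('m)"
  using module by (simp add: qmodule_def)

lemma le_one: "(q::'q) \<le> 1"
  using quantale by (simp add: quantale_def)

lemma mult_join: "S \<noteq> {} \<Longrightarrow> (q::'q) * join S = join ((*) q ` S)"
  using quantale by (simp add: quantale_def)

lemma act_one: "act 1 m = m"
  using module by (simp add: qmodule_def)

lemma act_mult: "act (p * q) m = act p (act q m)"
  using module by (simp add: qmodule_def)

lemma act_join: "S \<noteq> {} \<Longrightarrow> act q (join S) = join (act q ` S)"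
  using module by (simp add: qmodule_def)

lemma act_join_left: "T \<noteq> {} \<Longrightarrow> act (join T) m = join ((\<lambda>q. act q m) ` T)"
  using module by (simp add: qmodule_def)

lemma mult_isotone: "(a::'q) \<le> b \<Longrightarrow> q * a \<le> q * b"
  using mult_join[of "{a, b}" q] join_upper[OF quantale_joins, of "q * a" "{q * a, q * b}"]
  by (simp add: join_pair_of_le)

lemma act_isotone: "a \<le> b \<Longrightarrow> act q a \<le> act q b"
  using act_join[of "{a, b}" q] join_upper[OF module_joins, of "act q a" "{act q a, act q b}"]
  by (simp add: join_pair_of_le)

lemma act_isotone_left: "p \<le> q \<Longrightarrow> act p m \<le> act q m"
  using act_join_left[of "{p, q}" m] join_upper[OF module_joins, of "act p m" "{act p m, act q m}"]
  by (simp add: join_pair_of_le)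

lemma act_le: "act q m \<le> m"
  using act_isotone_left[OF le_one[of q], of m] by (simp add: act_one)

lemma act_mult_le: "act (p * q) m \<le> act q m"
  by (simp add: act_mult act_le)

lemma mfilter_product_upset:
  assumes F: "mfilter F" and G: "mfilter G"
  shows "mfilter {q::'q. \<exists>f\<in>F. \<exists>g\<in>G. f * g \<le> q}" (is "mfilter ?T")
  unfolding mfilter_def
proof (intro conjI allI impI ballI)
  have "(1::'q) * 1 \<le> 1"
    by simp
  then show "1 \<in> ?T"
    using mfilter_one[OF F] mfilter_one[OF G] by blast
next
  fix a b :: 'q
  assume ab: "a \<in> ?T \<and> a \<le> b"
  then obtain f g where "f \<in> F" "g \<in> G" "f * g \<le> a"
    by blast
  moreover from this(3) ab have "f * g \<le> b"
    by (meson order_trans)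
  ultimately show "b \<in> ?T"
    by blast
next
  fix a b
  assume "a \<in> ?T" "b \<in> ?T"
  then obtain f g f' g' where fg: "f \<in> F" "g \<in> G" "f * g \<le> a" "f' \<in> F" "g' \<in> G" "f' * g' \<le> b"
    by blast
  have "(f * f') * (g * g') = (f * g) * (f' * g')"
    by (simp add: ac_simps)
  also have "\<dots> \<le> a * (f' * g')"
    using mult_isotone[OF fg(3), of "f' * g'"] by (simp add: mult.commute)
  also have "\<dots> \<le> a * b"
    using mult_isotone[OF fg(6)] by simp
  finally show "a * b \<in> ?T"
    using mfilter_mult[OF F fg(1,4)] mfilter_mult[OF G fg(2,5)] by blast
qed

lemma mem_mfsumE:
  assumes F: "mfilter (F :: 'q set)" and G: "mfilter G" and "s \<in> mfsum F G"
  obtains f g where "f \<in> F" "g \<in> G" "f * g \<le> s"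
proof -
  let ?T = "{q. \<exists>f\<in>F. \<exists>g\<in>G. f * g \<le> q}"
  have "F \<union> G \<subseteq> ?T"
    using mfilter_one[OF F] mfilter_one[OF G]
    by (auto, metis mult_1_right order_refl, metis mult_1 order_refl)
  then have "mfsum F G \<subseteq> ?T"
    using mfilter_product_upset[OF F G] unfolding mfsum_def by blast
  with assms(3) obtain f g where "f \<in> F" "g \<in> G" "f * g \<le> s"
    by blast
  then show thesis
    by (rule that)
qed

lemma loc_below_down_closed: "down_closed (\<lambda>y. loc_below act F y c)"
  unfolding down_closed_def loc_below_def by (meson act_isotone order_trans)

lemma loc_below_join_closed:
  assumes "mfilter F"
  shows "join_closed (\<lambda>y. loc_below act F y c)"
  unfolding join_closed_def
proof (intro allI impI)
  fix y z
  assume "loc_below act F y c" "loc_below act F z c"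
  then obtain u w where u: "u \<in> F" "act u y \<le> c" and w: "w \<in> F" "act w z \<le> c"
    unfolding loc_below_def by blast
  have "act (u * w) y \<le> c"
    using u(2) act_mult_le[of w u y] by (simp add: mult.commute)
  moreover have "act (u * w) z \<le> c"
    using w(2) act_mult_le[of u w z] by simp
  ultimately have "act (u * w) (join {y, z}) \<le> c"
    using act_join[of "{y, z}"] join_pair_least[OF module_joins] by simp
  then show "loc_below act F (join {y, z}) c"
    unfolding loc_below_def using mfilter_mult[OF assms u(1) w(1)] by blast
qed

lemma step1_le:
  assumes "1 \<in> F" "a \<le> c"
  shows "step1 act F a c"
proof (rule step1_of_loc_below[of "{a}"])
  show "loc_below act F y c" if "y \<in> {a}" for y
    using that assms unfolding loc_below_def by (intro bexI[of _ 1]) (simp_all add: act_one)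
qed (simp_all add: join_singleton)

lemma step1_join_left:
  assumes "S \<noteq> {}" "\<And>x. x \<in> S \<Longrightarrow> step1 act F x c"
  shows "step1 act F (join S) c"
proof -
  obtain Y where Y: "\<And>x. x \<in> S \<Longrightarrow> Y x \<noteq> {} \<and> x \<le> join (Y x) \<and> (\<forall>y\<in>Y x. loc_below act F y c)"
    using assms(2) unfolding step1_iff_loc_below by metis
  have "join S \<le> join (\<Union>x\<in>S. Y x)"
  proof (rule join_least[OF module_joins assms(1)])
    fix x assume "x \<in> S"
    then show "x \<le> join (\<Union>x\<in>S. Y x)"
      using Y join_mono[OF module_joins, of "Y x" "\<Union>x\<in>S. Y x"] by (meson UN_upper order_trans)
  qed
  then show ?thesis
    using assms(1) Y by (intro step1_of_loc_below[of "\<Union>x\<in>S. Y x"]) auto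
qed

lemma loc_steps_join:
  "S \<noteq> {} \<Longrightarrow> (\<And>x. x \<in> S \<Longrightarrow> loc_steps act F m x b) \<Longrightarrow> loc_steps act F m (join S) b"
proof (induction m arbitrary: S)
  case 0
  then show ?case by (simp add: join_least[OF module_joins])
next
  case (Suc m)
  then have "\<forall>x\<in>S. \<exists>c. step1 act F x c \<and> loc_steps act F m c b"
    by simp
  then obtain c where c: "\<forall>x\<in>S. step1 act F x (c x) \<and> loc_steps act F m (c x) b"
    by (metis bchoice)
  have "step1 act F x (join (c ` S))" if "x \<in> S" for x
    using c that join_upper[OF module_joins, of "c x" "c ` S"]
    unfolding step1_iff_loc_below loc_below_def by (meson imageI order_trans)
  then have "step1 act F (join S) (join (c ` S))"
    by (rule step1_join_left[OF Suc.prems(1)])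
  moreover have "loc_steps act F m (join (c ` S)) b"
    using Suc.IH[of "c ` S"] Suc.prems(1) c by blast
  ultimately show ?case
    by auto
qed

lemma loc_steps_Int_Suc:
  assumes "mfilter G" "mfilter H" "u \<in> G" "w \<in> H"
    and "loc_steps act (G \<inter> H) k (act u z) b" "loc_steps act (G \<inter> H) k (act w z) b"
  shows "loc_steps act (G \<inter> H) (Suc k) z b"
proof -
  have "join {u, w} \<in> G \<inter> H"
    using mfilter_up[OF assms(1,3)] mfilter_up[OF assms(2,4)] join_upper[OF quantale_joins] by simp
  then have "step1 act (G \<inter> H) z (join {act u z, act w z})"
  proof (intro step1_of_loc_below[of "{z}"])
    show "loc_below act (G \<inter> H) y (join {act u z, act w z})"
      if "join {u, w} \<in> G \<inter> H" "y \<in> {z}" for y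
      using that act_join_left[of "{u, w}" z] unfolding loc_below_def by (intro bexI) auto
  qed (auto simp: join_singleton)
  moreover have "loc_steps act (G \<inter> H) k (join {act u z, act w z}) b"
    using assms(5,6) loc_steps_join[of "{act u z, act w z}"] by blast
  ultimately show ?thesis
    by auto
qed

lemma loc_steps_Suc: "1 \<in> F \<Longrightarrow> loc_steps act F m a b \<Longrightarrow> loc_steps act F (Suc m) a b"
  by (induction m arbitrary: a) (auto intro: step1_le)

lemma loc_steps_mono:
  assumes "1 \<in> F" "m \<le> k" "loc_steps act F m a b"
  shows "loc_steps act F k a b"
  using assms(2)
proof (induction k rule: dec_induct)
  case base
  then show ?case by (rule assms(3))
next
  case (step n)
  then show ?case by (intro loc_steps_Suc[OF assms(1)])
qed

lemma loc_steps_of_stepn: "stepn act F m a b \<Longrightarrow> loc_steps act F m a b"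
proof (induction m arbitrary: a)
  case (Suc m)
  then obtain c where "step1 act F a c" "stepn act F m c b"
    unfolding stepn_def using relpowp_Suc_D2 by metis
  then show ?case
    using Suc.IH by auto
qed (simp add: stepn_def)

lemma stepn_Suc_of_loc_steps: "1 \<in> F \<Longrightarrow> loc_steps act F m a b \<Longrightarrow> stepn act F (Suc m) a b"
proof (induction m arbitrary: a)
  case 0
  then have "step1 act F a b"
    using step1_le by simp
  then show ?case
    unfolding stepn_def by (rule relpowp_Suc_I2[OF _ relpowp_0_I])
next
  case (Suc m)
  then obtain c where "step1 act F a c" "loc_steps act F m c b"
    by auto
  then show ?case
    using Suc unfolding stepn_def by (meson relpowp_Suc_I2)
qed

lemma loc_le_iff_loc_steps:
  assumes "1 \<in> F"
  shows "loc_le act F a b \<longleftrightarrow> (\<exists>m. loc_steps act F m a b)"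
proof
  assume "loc_le act F a b"
  then show "\<exists>m. loc_steps act F m a b"
    unfolding loc_le_def using loc_steps_of_stepn by blast
next
  assume "\<exists>m. loc_steps act F m a b"
  then obtain m where "stepn act F (Suc m) a b"
    using stepn_Suc_of_loc_steps[OF assms] by blast
  then show "loc_le act F a b"
    unfolding loc_le_def by (intro exI[of _ "Suc m"]) simp
qed

lemma loc_eq_refl: "1 \<in> F \<Longrightarrow> loc_eq act F a a"
  unfolding loc_eq_def by (blast intro: loc_le_of_step1 step1_le)

lemma cls_eq_iff:
  assumes "1 \<in> F"
  shows "cls act F a = cls act F b \<longleftrightarrow> loc_eq act F a b"
proof
  assume "cls act F a = cls act F b"
  moreover have "b \<in> cls act F b"
    using loc_eq_refl[OF assms] by (simp add: cls_def)
  ultimately have "b \<in> cls act F a"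
    by simp
  then show "loc_eq act F a b"
    by (simp add: cls_def)
next
  assume "loc_eq act F a b"
  then show "cls act F a = cls act F b"
    unfolding cls_def using loc_eq_sym loc_eq_trans by blast
qed

lemma locmap_cls:
  assumes F: "1 \<in> F" and FG: "F \<subseteq> G"
  shows "locmap act F G (cls act F a) = cls act G a"
proof -
  have "a \<in> cls act F a"
    using loc_eq_refl[OF F] by (simp add: cls_def)
  then have "(SOME x. x \<in> cls act F a) \<in> cls act F a"
    by (rule someI)
  then have "loc_eq act G a (SOME x. x \<in> cls act F a)"
    using loc_eq_filter_mono[OF FG] by (simp add: cls_def)
  then show ?thesis
    unfolding locmap_def using cls_eq_iff F FG by blast
qed

lemma loc_below_mfsum_common_factor:
  assumes F: "mfilter F" and "finite J" and "\<And>j. j \<in> J \<Longrightarrow> mfilter (Fs j)"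
    and "\<And>j. j \<in> J \<Longrightarrow> loc_below act (mfsum F (Fs j)) y (xs j)"
  shows "\<exists>f\<in>F. \<forall>j\<in>J. loc_below act (Fs j) (act f y) (xs j)"
  using assms(2,3,4)
proof (induction J rule: finite_induct)
  case empty
  then show ?case
    using mfilter_one[OF F] by blast
next
  case (insert j J)
  then obtain f where f: "f \<in> F" "\<forall>i\<in>J. loc_below act (Fs i) (act f y) (xs i)"
    by blast
  obtain s where s: "s \<in> mfsum F (Fs j)" "act s y \<le> xs j"
    using insert.prems(2) unfolding loc_below_def by blast
  obtain f' g where fg: "f' \<in> F" "g \<in> Fs j" "f' * g \<le> s"
    using mem_mfsumE[OF F insert.prems(1) s(1)] by blast
  have "loc_below act (Fs i) (act (f * f') y) (xs i)" if "i \<in> insert j J" for i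
    using that
  proof
    assume "i = j"
    have "act g (act (f * f') y) = act f (act (f' * g) y)"
      by (simp add: act_mult[symmetric] ac_simps)
    also have "\<dots> \<le> act s y"
      using act_le order_trans act_isotone_left[OF fg(3)] by blast
    finally show ?thesis
      unfolding loc_below_def using \<open>i = j\<close> fg(2) s(2) order_trans by blast
  next
    assume "i \<in> J"
    then obtain g' where g': "g' \<in> Fs i" "act g' (act f y) \<le> xs i"
      using f(2) unfolding loc_below_def by blast
    have "act g' (act (f * f') y) \<le> act g' (act f y)"
      using act_isotone[OF act_mult_le[of f' f y]] by (simp add: mult.commute)
    then show ?thesis
      unfolding loc_below_def using g' order_trans by blast
  qed
  then show ?case
    using mfilter_mult[OF F f(1) fg(1)] by blast
qed

lemma locmap_mfsum_eq_iff:
  assumes "1 \<in> F" "1 \<in> G"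
  shows "locmap act F (mfsum F G) (cls act F x) = locmap act G (mfsum F G) (cls act G y)
    \<longleftrightarrow> loc_eq act (mfsum F G) x y"
  using locmap_cls[OF assms(1) mfsum_upper1] locmap_cls[OF assms(2) mfsum_upper2]
    cls_eq_iff[OF mfsum_one] by simp

lemma diag_cls:
  assumes "1 \<in> F" "\<forall>k\<in>{1..n}. F \<subseteq> Fs k"
  shows "diag act F n Fs (cls act F a) = (\<lambda>k\<in>{1..n}. cls act (Fs k) a)"
  unfolding diag_def using assms locmap_cls by (intro restrict_ext) blast

lemma restrict_cls_mem_diag_image_iff:
  assumes "1 \<in> F" "\<forall>k\<in>{1..n}. F \<subseteq> Fs k"
  shows "(\<lambda>k\<in>{1..n}. cls act (Fs k) (xs k)) \<in> diag act F n Fs ` locmod act F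
    \<longleftrightarrow> (\<exists>a. \<forall>k\<in>{1..n}. loc_eq act (Fs k) a (xs k))"
proof -
  have "(\<lambda>k\<in>{1..n}. cls act (Fs k) (xs k)) \<in> diag act F n Fs ` locmod act F
      \<longleftrightarrow> (\<exists>a. (\<lambda>k\<in>{1..n}. cls act (Fs k) (xs k)) = diag act F n Fs (cls act F a))"
    unfolding locmod_def by blast
  also have "\<dots> \<longleftrightarrow> (\<exists>a. \<forall>k\<in>{1..n}. cls act (Fs k) (xs k) = cls act (Fs k) a)"
    by (simp add: diag_cls[OF assms] restrict_eq_iff)
  also have "\<dots> \<longleftrightarrow> (\<exists>a. \<forall>k\<in>{1..n}. loc_eq act (Fs k) a (xs k))"
    using assms cls_eq_iff loc_eq_sym by (meson subsetD)
  finally show ?thesis .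
qed

end

section \<open>Shrinkable modules\<close>

locale shrinkable_quantale_module = quantale_module act for act :: "'q::{order,comm_monoid_mult} \<Rightarrow> 'm::order \<Rightarrow> 'm" +
  assumes shrinkable: "shrinkable TYPE('m)"
begin

lemma step1_covered:
  assumes "mfilter F" "step1 act F a c"
  shows "covered (\<lambda>y. loc_below act F y c) a"
proof -
  obtain Y where "Y \<noteq> {}" "a \<le> join Y" "\<forall>y\<in>Y. loc_below act F y c"
    using assms(2) unfolding step1_iff_loc_below by blast
  then show ?thesis
    by (intro covered_if_le_join[OF module_joins shrinkable loc_below_down_closed
          loc_below_join_closed[OF assms(1)]])
qed

text \<open>Refine a into pieces y with u y \<le> c and w y \<le> e for some u \<in> G, w \<in> H, where c
  and e are the first steps of the two chains. The single (G \<inter> H)-step by join {u, w} sends y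
  to join {u y, w y}; both u y and w y lie below a and hence start a pair of chains of total
  length m + p - 1.\<close>
lemma loc_steps_Int:
  assumes G: "mfilter G" and H: "mfilter H"
  shows "loc_steps act G m a b \<Longrightarrow> loc_steps act H p a b \<Longrightarrow> loc_steps act (G \<inter> H) (m + p) a b"
proof (induction "m + p" arbitrary: m p a b rule: less_induct)
  case less
  have one: "1 \<in> G \<inter> H"
    using G H mfilter_one by blast
  show ?case
  proof (cases "m = 0 \<or> p = 0")
    case True
    then have "loc_steps act (G \<inter> H) 0 a b"
      using less.prems by auto
    then show ?thesis
      using loc_steps_mono[OF one] by blast
  next
    case False
    then obtain m' p' where mp: "m = Suc m'" "p = Suc p'"
      by (metis not0_implies_Suc)
    then obtain c e where c: "step1 act G a c" "loc_steps act G m' c b"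
      and e: "step1 act H a e" "loc_steps act H p' e b"
      using less.prems by auto
    have "covered (\<lambda>y. loc_below act G y c \<and> loc_below act H y e) a"
      using step1_covered[OF G c(1)] step1_covered[OF H e(1)]
      by (intro covered_conj[OF module_joins shrinkable] loc_below_down_closed
          loc_below_join_closed[OF H])
    then obtain Y where Y: "Y \<noteq> {}" "a \<le> join Y"
      and pieces: "\<forall>y\<in>Y. (loc_below act G y c \<and> loc_below act H y e) \<and> y \<le> a"
      unfolding covered_def by blast
    have "loc_steps act (G \<inter> H) (m + p) z b" if z: "z \<in> Y" for z
    proof -
      obtain u w where u: "u \<in> G" "act u z \<le> c" and w: "w \<in> H" "act w z \<le> e"
        and "z \<le> a"
        using pieces z unfolding loc_below_def by blast
      then have "act u z \<le> a" "act w z \<le> a"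
        using act_le order_trans by blast+
      then have "loc_steps act H p (act u z) b" "loc_steps act G m (act w z) b"
        using loc_steps_down less.prems by blast+
      moreover have "m' + p < m + p" "m + p' < m + p"
        using mp by simp_all
      ultimately have "loc_steps act (G \<inter> H) (m' + p) (act u z) b"
        and "loc_steps act (G \<inter> H) (m' + p) (act w z) b"
        using less.hyps loc_steps_down[OF u(2) c(2)] loc_steps_down[OF w(2) e(2)] mp
        by (blast, metis add_Suc add_Suc_right)
      moreover have "m + p = Suc (m' + p)"
        using mp by simp
      ultimately show ?thesis
        using loc_steps_Int_Suc[OF G H u(1) w(1)] by simp
    qed
    then show ?thesis
      using loc_steps_join[OF Y(1)] loc_steps_down[OF Y(2)] by blast
  qed
qed

lemma loc_le_Int:
  assumes "mfilter G" "mfilter H" "loc_le act G a b" "loc_le act H a b"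
  shows "loc_le act (G \<inter> H) a b"
  using assms loc_steps_Int[OF assms(1,2)] mfilter_one
  by (metis IntI loc_le_iff_loc_steps)

lemma loc_le_INT:
  assumes "finite I" "I \<noteq> {}" "\<And>i. i \<in> I \<Longrightarrow> mfilter (Fs i)" "\<And>i. i \<in> I \<Longrightarrow> loc_le act (Fs i) a b"
  shows "loc_le act (\<Inter>i\<in>I. Fs i) a b"
  using assms
proof (induction I rule: finite_ne_induct)
  case (insert i I)
  have "mfilter (\<Inter>i\<in>I. Fs i)"
    using insert.prems(1) by (intro mfilter_INT) simp
  moreover have "loc_le act (\<Inter>i\<in>I. Fs i) a b"
    using insert by simp
  ultimately show ?case
    using loc_le_Int[of "Fs i" "\<Inter>i\<in>I. Fs i"] insert.prems by simp
qed simp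

lemma loc_eq_INT:
  assumes "finite I" "I \<noteq> {}" "\<And>i. i \<in> I \<Longrightarrow> mfilter (Fs i)" "\<And>i. i \<in> I \<Longrightarrow> loc_eq act (Fs i) a b"
  shows "loc_eq act (\<Inter>i\<in>I. Fs i) a b"
proof -
  have "loc_le act (\<Inter>i\<in>I. Fs i) a b" "loc_le act (\<Inter>i\<in>I. Fs i) b a"
    using assms(4) unfolding loc_eq_def by (intro loc_le_INT[OF assms(1-3)]; blast)+
  then show ?thesis
    unfolding loc_eq_def ..
qed

lemma inj_on_diag:
  assumes "n \<ge> 1" "\<forall>k\<in>{1..n}. mfilter (Fs k)" "F = (\<Inter>k\<in>{1..n}. Fs k)"
  shows "inj_on (diag act F n Fs) (locmod act F)"
proof (rule inj_onI)
  fix C C'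
  assume "C \<in> locmod act F" "C' \<in> locmod act F" and eq: "diag act F n Fs C = diag act F n Fs C'"
  then obtain a b where ab: "C = cls act F a" "C' = cls act F b"
    unfolding locmod_def by blast
  have one: "1 \<in> Fs k" if "k \<in> {1..n}" for k
    using assms(2) that mfilter_one by blast
  then have F: "1 \<in> F" "\<forall>k\<in>{1..n}. F \<subseteq> Fs k"
    using assms(3) by auto
  then have "\<forall>k\<in>{1..n}. cls act (Fs k) a = cls act (Fs k) b"
    using eq unfolding ab diag_cls[OF F] restrict_eq_iff by blast
  then have "loc_eq act F a b"
    unfolding assms(3) using assms(1,2) one cls_eq_iff by (intro loc_eq_INT) auto
  then show "C = C'"
    unfolding ab using cls_eq_iff F(1) by blast
qed

lemma compatible_family_refinement:
  assumes "finite I" "i \<in> I" and filters: "\<And>i. i \<in> I \<Longrightarrow> mfilter (Fs i)"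
    and steps: "\<And>j. j \<in> I \<Longrightarrow> step1 act (mfsum (Fs i) (Fs j)) (xs i) (xs j)"
  shows "\<exists>Y. Y \<noteq> {} \<and> xs i \<le> join Y \<and>
    (\<forall>y\<in>Y. \<exists>f\<in>Fs i. \<forall>j\<in>I. loc_below act (Fs j) (act f y) (xs j))"
proof -
  have "covered (\<lambda>y. \<forall>j\<in>I. loc_below act (mfsum (Fs i) (Fs j)) y (xs j)) (xs i)"
    using assms(1) mfilter_mfsum steps
    by (intro covered_Ball[OF module_joins shrinkable])
      (auto intro: loc_below_down_closed loc_below_join_closed step1_covered)
  then obtain Y where Y: "Y \<noteq> {}" "xs i \<le> join Y"
    and below: "\<forall>y\<in>Y. \<forall>j\<in>I. loc_below act (mfsum (Fs i) (Fs j)) y (xs j)"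
    unfolding covered_def by blast
  have "\<exists>f\<in>Fs i. \<forall>j\<in>I. loc_below act (Fs j) (act f y) (xs j)" if y: "y \<in> Y" for y
    using loc_below_mfsum_common_factor[of "Fs i" I Fs y xs] filters assms(1,2) below y by blast
  then show ?thesis
    using Y by blast
qed

lemma exists_common_representative:
  assumes "finite I" "I \<noteq> {}" "\<And>i. i \<in> I \<Longrightarrow> mfilter (Fs i)"
    and "\<And>i j. i \<in> I \<Longrightarrow> j \<in> I \<Longrightarrow> step1 act (mfsum (Fs i) (Fs j)) (xs i) (xs j)"
  shows "\<exists>a. \<forall>k\<in>I. loc_eq act (Fs k) a (xs k)"
proof -
  define A where "A = {z. \<forall>j\<in>I. loc_below act (Fs j) z (xs j)}"
  have pieces: "\<exists>Y. Y \<noteq> {} \<and> xs i \<le> join Y \<and> (\<forall>y\<in>Y. \<exists>f\<in>Fs i. act f y \<in> A)"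
    if "i \<in> I" for i
    using compatible_family_refinement[of I i Fs xs] assms that unfolding A_def by simp
  obtain i0 where "i0 \<in> I"
    using assms(2) by blast
  then have "A \<noteq> {}"
    using pieces by blast
  have "loc_eq act (Fs k) (join A) (xs k)" if k: "k \<in> I" for k
  proof -
    have "step1 act (Fs k) (join A) (xs k)"
      using \<open>A \<noteq> {}\<close> k by (intro step1_of_loc_below[of A]) (auto simp: A_def)
    moreover obtain Y where Y: "Y \<noteq> {}" "xs k \<le> join Y" "\<forall>y\<in>Y. \<exists>f\<in>Fs k. act f y \<in> A"
      using pieces[OF k] by blast
    have "step1 act (Fs k) (xs k) (join A)"
    proof (rule step1_of_loc_below[OF Y(1,2)])
      fix y
      assume "y \<in> Y"
      then obtain f where "f \<in> Fs k" "act f y \<in> A"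
        using Y(3) by blast
      then show "loc_below act (Fs k) y (join A)"
        unfolding loc_below_def using join_upper[OF module_joins, of "act f y" A] by blast
    qed
    ultimately show ?thesis
      unfolding loc_eq_def by (blast intro: loc_le_of_step1)
  qed
  then show ?thesis
    by blast
qed

lemma common_representative_iff:
  assumes "finite I" "I \<noteq> {}" "\<And>i. i \<in> I \<Longrightarrow> mfilter (Fs i)"
    and one_step: "\<And>i j. i \<in> I \<Longrightarrow> j \<in> I \<Longrightarrow> i \<noteq> j \<Longrightarrow> one_step act (mfsum (Fs i) (Fs j))"
  shows "(\<exists>a. \<forall>k\<in>I. loc_eq act (Fs k) a (xs k))
    \<longleftrightarrow> (\<forall>i\<in>I. \<forall>j\<in>I. i \<noteq> j \<longrightarrow> loc_eq act (mfsum (Fs i) (Fs j)) (xs i) (xs j))"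
proof
  assume "\<exists>a. \<forall>k\<in>I. loc_eq act (Fs k) a (xs k)"
  then obtain a where "\<forall>k\<in>I. loc_eq act (Fs k) a (xs k)"
    by blast
  then show "\<forall>i\<in>I. \<forall>j\<in>I. i \<noteq> j \<longrightarrow> loc_eq act (mfsum (Fs i) (Fs j)) (xs i) (xs j)"
    using loc_eq_filter_mono[OF mfsum_upper1] loc_eq_filter_mono[OF mfsum_upper2]
      loc_eq_sym loc_eq_trans by meson
next
  assume eq: "\<forall>i\<in>I. \<forall>j\<in>I. i \<noteq> j \<longrightarrow> loc_eq act (mfsum (Fs i) (Fs j)) (xs i) (xs j)"
  have "step1 act (mfsum (Fs i) (Fs j)) (xs i) (xs j)" if "i \<in> I" "j \<in> I" for i j
  proof (cases "i = j")
    case True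
    then show ?thesis
      by (simp add: step1_le mfsum_one)
  next
    case False
    then show ?thesis
      using eq one_step that unfolding one_step_def loc_eq_def by blast
  qed
  then show "\<exists>a. \<forall>k\<in>I. loc_eq act (Fs k) a (xs k)"
    using exists_common_representative[of I Fs xs] assms(1-3) by blast
qed

lemma mem_diag_image_iff_locmap_eq:
  assumes "n \<ge> 1" "\<forall>k\<in>{1..n}. mfilter (Fs k)" "F = (\<Inter>k\<in>{1..n}. Fs k)"
    and "\<forall>i j. 1 \<le> i \<and> i < j \<and> j \<le> n \<longrightarrow> one_step act (mfsum (Fs i) (Fs j))"
  shows "(\<lambda>k\<in>{1..n}. cls act (Fs k) (xs k)) \<in> diag act F n Fs ` locmod act F
    \<longleftrightarrow> (\<forall>i j. 1 \<le> i \<and> i < j \<and> j \<le> n \<longrightarrow>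
          locmap act (Fs i) (mfsum (Fs i) (Fs j)) (cls act (Fs i) (xs i))
        = locmap act (Fs j) (mfsum (Fs i) (Fs j)) (cls act (Fs j) (xs j)))"
proof -
  have filters: "\<And>k. k \<in> {1..n} \<Longrightarrow> mfilter (Fs k)"
    using assms(2) by blast
  then have one: "\<forall>k\<in>{1..n}. 1 \<in> Fs k"
    using mfilter_one by blast
  then have F: "1 \<in> F" "\<forall>k\<in>{1..n}. F \<subseteq> Fs k"
    using assms(3) by auto
  have range: "finite {1..n}" "{1..n} \<noteq> {}"
    using assms(1) by auto
  have one_step: "\<forall>i\<in>{1..n}. \<forall>j\<in>{1..n}. i \<noteq> j \<longrightarrow> one_step act (mfsum (Fs i) (Fs j))"
    using assms(4) by (subst (asm) all_less_pairs_iff) (simp_all add: mfsum_commute)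
  have "(\<lambda>k\<in>{1..n}. cls act (Fs k) (xs k)) \<in> diag act F n Fs ` locmod act F
      \<longleftrightarrow> (\<exists>a. \<forall>k\<in>{1..n}. loc_eq act (Fs k) a (xs k))"
    by (rule restrict_cls_mem_diag_image_iff[OF F])
  also have "\<dots> \<longleftrightarrow> (\<forall>i\<in>{1..n}. \<forall>j\<in>{1..n}. i \<noteq> j \<longrightarrow> loc_eq act (mfsum (Fs i) (Fs j)) (xs i) (xs j))"
    using one_step by (intro common_representative_iff[of "{1..n}" Fs, OF range filters]) auto
  also have "\<dots> \<longleftrightarrow> (\<forall>i j. 1 \<le> i \<and> i < j \<and> j \<le> n \<longrightarrow>
      locmap act (Fs i) (mfsum (Fs i) (Fs j)) (cls act (Fs i) (xs i))
    = locmap act (Fs j) (mfsum (Fs i) (Fs j)) (cls act (Fs j) (xs j)))"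
    using one by (subst all_less_pairs_iff) (auto simp: locmap_mfsum_eq_iff mfsum_commute intro: loc_eq_sym)
  finally show ?thesis .
qed

end

theorem mainTheorem5:
  fixes act :: "'q::{order,comm_monoid_mult} \<Rightarrow> 'm::order \<Rightarrow> 'm"
    and n :: nat and Fs :: "nat \<Rightarrow> 'q set" and F :: "'q set"
  assumes "quantale TYPE('q)"
    and "qmodule act"
    and "shrinkable TYPE('m)"
    and "n \<ge> 1"
    and "\<forall>k\<in>{1..n}. mfilter (Fs k)"
    and "F = (\<Inter>k\<in>{1..n}. Fs k)"
  shows "inj_on (diag act F n Fs) (locmod act F)
    \<and> ((\<forall>i j. 1 \<le> i \<and> i < j \<and> j \<le> n \<longrightarrow> one_step act (mfsum (Fs i) (Fs j))) \<longrightarrow>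
        (\<forall>xs :: nat \<Rightarrow> 'm.
           restrict (\<lambda>k. cls act (Fs k) (xs k)) {1..n} \<in> diag act F n Fs ` locmod act F
           \<longleftrightarrow> (\<forall>i j. 1 \<le> i \<and> i < j \<and> j \<le> n \<longrightarrow>
                 locmap act (Fs i) (mfsum (Fs i) (Fs j)) (cls act (Fs i) (xs i))
               = locmap act (Fs j) (mfsum (Fs i) (Fs j)) (cls act (Fs j) (xs j)))))"
proof -
  interpret shrinkable_quantale_module act
    using assms(1-3) by unfold_locales
  show ?thesis
    using inj_on_diag[OF assms(4-6)] mem_diag_image_iff_locmap_eq[OF assms(4-6)] by blast
qed

end
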